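(* Let $\ell,n$ be integers with $0<\ell\le n$, and let $\mathcal H$ be a set of intervals that is $\ell$-powerful in $(0,n)$ and is minimal with this property (no proper subset of $\mathcal H$ is $\ell$-powerful in $(0,n)$). Then, writing $\mathcal H=\{(a_i,b_i):1\le i\le t\}$ in standard form, we have $a_j\ge b_i-\ell+2$ for all $i,j\in\{1,\dots,t\}$ with $j\ge i+2$.
   Context: An interval is a pair $(a,b)$ of integers with $a\le b$; its length is $b-a$. An interval $(a,b)$ captures $(c,d)$ if $a\le c\le d\le b$; a set $\mathcal H$ of intervals captures $(c,d)$ if some member of $\mathcal H$ captures $(c,d)$. For integers $0<\ell\le n$, a set $\mathcal H$ of intervals is $\ell$-powerful in $(0,n)$ if $0\le a\le b\le n$ for all $(a,b)\in\mathcal H$, and $\mathcal H$ captures every interval of length $\ell$ that is captured by $(0,n)$ (i.e. every $(h,h+\ell)$ with $0\le h\le n-\ell$). A standard form of a set $\mathcal H$ of intervals is an expression $\mathcal H=\{(a_i,b_i):1\le i\le t\}$ with $t\ge 1$, $0\le a_1<a_2<\dots<a_t\le n$ and $0\le b_1<b_2<\dots<b_t\le n$; such a form exists if and only if no member of $\mathcal H$ captures another distinct member. *)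

theory Defs
  imports Main
begin

definition is_interval :: "int \<times> int \<Rightarrow> bool" where
  "is_interval I \<longleftrightarrow> fst I \<le> snd I"

definition captures :: "int \<times> int \<Rightarrow> int \<times> int \<Rightarrow> bool" where
  "captures I J \<longleftrightarrow> fst I \<le> fst J \<and> fst J \<le> snd J \<and> snd J \<le> snd I"

definition set_captures :: "(int \<times> int) set \<Rightarrow> int \<times> int \<Rightarrow> bool" where
  "set_captures H J \<longleftrightarrow> (\<exists>I\<in>H. captures I J)"

definition powerful :: "int \<Rightarrow> int \<Rightarrow> (int \<times> int) set \<Rightarrow> bool" where
  "powerful l n H \<longleftrightarrow>
     (\<forall>(a,b)\<in>H. 0 \<le> a \<and> a \<le> b \<and> b \<le> n) \<and>
     (\<forall>h. 0 \<le> h \<and> h \<le> n - l \<longrightarrow> set_captures H (h, h + l))"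

definition minimal_powerful :: "int \<Rightarrow> int \<Rightarrow> (int \<times> int) set \<Rightarrow> bool" where
  "minimal_powerful l n H \<longleftrightarrow> powerful l n H \<and> (\<forall>H'. H' \<subset> H \<longrightarrow> \<not> powerful l n H')"

definition standard_form :: "int \<Rightarrow> (int \<times> int) set \<Rightarrow> nat \<Rightarrow> (nat \<Rightarrow> int) \<Rightarrow> (nat \<Rightarrow> int) \<Rightarrow> bool" where
  "standard_form n H t a b \<longleftrightarrow>
     t \<ge> 1 \<and> H = (\<lambda>i. (a i, b i)) ` {1..t} \<and>
     0 \<le> a 1 \<and> strict_mono_on {1..t} a \<and> a t \<le> n \<and>
     0 \<le> b 1 \<and> strict_mono_on {1..t} b \<and> b t \<le> n"

end

theory Submission
  imports Defs "HOL-Library.Product_Lexorder"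
begin

text \<open>
  In a minimal powerful family every member has a private window, i.e. a window of length l that
  no other member captures, since otherwise it could be removed. Hence no member captures another,
  so sorting the family lexicographically yields a standard form. If a_j \<le> b_i - l + 1 for
  some j \<ge> i + 2, then every window inside (a_(i+1), b_(i+1)) either ends by b_i, and so lies
  in (a_i, b_i), or starts at or after a_j, and so lies in (a_j, b_j): the middle interval would
  have no private window.
\<close>

lemma captures_trans: "captures I J \<Longrightarrow> captures J K \<Longrightarrow> captures I K"
  unfolding captures_def by auto

lemma powerful_finite:
  assumes "powerful l n H"
  shows "finite H"
proof (rule finite_subset)
  show "H \<subseteq> {0..n} \<times> {0..n}"
    using assms unfolding powerful_def by fastforce
qed simp

lemma powerful_nonempty:
  assumes "powerful l n H" and "l \<le> n"
  shows "H \<noteq> {}"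
  using assms unfolding powerful_def set_captures_def by fastforce

lemma powerful_Diff_redundant:
  assumes "powerful l n H"
    and "\<And>h. 0 \<le> h \<Longrightarrow> h \<le> n - l \<Longrightarrow> captures J (h, h + l) \<Longrightarrow> set_captures (H - {J}) (h, h + l)"
  shows "powerful l n (H - {J})"
  unfolding powerful_def
proof (intro conjI allI impI)
  show "\<forall>(a, b)\<in>H - {J}. 0 \<le> a \<and> a \<le> b \<and> b \<le> n"
    using assms(1) unfolding powerful_def by auto
next
  fix h assume h: "0 \<le> h \<and> h \<le> n - l"
  then obtain K where "K \<in> H" "captures K (h, h + l)"
    using assms(1) unfolding powerful_def set_captures_def by blast
  then show "set_captures (H - {J}) (h, h + l)"
    using assms(2) h unfolding set_captures_def by (cases "K = J") auto
qed

lemma minimal_powerful_private_window: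
  assumes "minimal_powerful l n H" and "J \<in> H"
  obtains h where "0 \<le> h" "h \<le> n - l" "captures J (h, h + l)"
    "\<not> set_captures (H - {J}) (h, h + l)"
proof -
  have "\<not> powerful l n (H - {J})"
    using assms unfolding minimal_powerful_def by blast
  moreover have "powerful l n H"
    using assms(1) unfolding minimal_powerful_def by blast
  ultimately show thesis
    using powerful_Diff_redundant that by blast
qed

lemma minimal_powerful_no_capture:
  assumes "minimal_powerful l n H" and "I \<in> H" and "J \<in> H" and "captures I J"
  shows "I = J"
proof (rule ccontr)
  assume "I \<noteq> J"
  obtain h where "captures J (h, h + l)" "\<not> set_captures (H - {J}) (h, h + l)"
    using minimal_powerful_private_window[OF assms(1,3)] by blast
  then show False
    using captures_trans[OF assms(4)] \<open>I \<noteq> J\<close> assms(2) unfolding set_captures_def by blast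
qed

lemma minimal_powerful_gap:
  assumes "minimal_powerful l n H"
    and "(a1, b1) \<in> H" and "(a2, b2) \<in> H" and "(a3, b3) \<in> H"
    and "a1 < a2" and "b2 < b3"
  shows "a3 \<ge> b1 - l + 2"
proof (rule ccontr)
  assume "\<not> a3 \<ge> b1 - l + 2"
  obtain h where h: "captures (a2, b2) (h, h + l)"
    and unshared: "\<not> set_captures (H - {(a2, b2)}) (h, h + l)"
    using minimal_powerful_private_window[OF assms(1,3)] by blast
  have "captures (a1, b1) (h, h + l) \<or> captures (a3, b3) (h, h + l)"
    using h \<open>\<not> a3 \<ge> b1 - l + 2\<close> assms(5,6) unfolding captures_def by auto
  then show False
    using unshared assms(2,4,5,6) unfolding set_captures_def by fastforce
qed

lemma antichain_lex_less:
  assumes "fst p \<le> snd p" and "fst q \<le> snd q" and "p \<noteq> q"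
    and "\<not> captures p q" and "\<not> captures q p" and "p < q"
  shows "fst p < fst q \<and> snd p < snd q"
  using assms unfolding captures_def less_prod_def by auto

lemma nth_pred_image: "(\<lambda>i. xs ! (i - 1)) ` {1..length xs} = set xs"
proof -
  have "(\<lambda>i. xs ! (i - 1)) ` {1..length xs} = (!) xs ` {0..<length xs}"
  proof (intro equalityI subsetI)
    fix x assume "x \<in> (!) xs ` {0..<length xs}"
    then obtain k where "k < length xs" "x = xs ! k" by auto
    then show "x \<in> (\<lambda>i. xs ! (i - 1)) ` {1..length xs}"
      by (intro image_eqI[of _ _ "Suc k"]) auto
  qed auto
  also have "\<dots> = set xs"
    by (auto simp: in_set_conv_nth)
  finally show ?thesis .
qed

lemma antichain_standard_form:
  assumes "finite H" and "H \<noteq> {}"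
    and bounds: "\<forall>(a, b)\<in>H. 0 \<le> a \<and> a \<le> b \<and> b \<le> n"
    and antichain: "\<And>I J. I \<in> H \<Longrightarrow> J \<in> H \<Longrightarrow> captures I J \<Longrightarrow> I = J"
  shows "\<exists>t a b. standard_form n H t a b"
proof -
  define xs where "xs = sorted_list_of_set H"
  define t where "t = length xs"
  define a where "a i = fst (xs ! (i - 1))" for i
  define b where "b i = snd (xs ! (i - 1))" for i
  have set_xs: "set xs = H" and sorted: "sorted_wrt (<) xs" and "xs \<noteq> []"
    using assms(1,2) unfolding xs_def by auto
  have interval: "fst I \<le> snd I" if "I \<in> H" for I
    using bounds that by auto
  have member: "xs ! (i - 1) \<in> H" if "i \<in> {1..t}" for i
    using that set_xs unfolding t_def by auto
  have image: "H = (\<lambda>i. (a i, b i)) ` {1..t}"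
    using nth_pred_image[of xs] set_xs unfolding a_def b_def t_def by simp
  have mono: "a r < a s \<and> b r < b s" if "r \<in> {1..t}" "s \<in> {1..t}" "r < s" for r s
  proof -
    let ?p = "xs ! (r - 1)" and ?q = "xs ! (s - 1)"
    have "?p < ?q"
      using sorted_wrt_nth_less[OF sorted] that unfolding t_def by auto
    then have "?p \<noteq> ?q" by simp
    then have "\<not> captures ?p ?q" "\<not> captures ?q ?p"
      using antichain[OF member[OF that(1)] member[OF that(2)]]
        antichain[OF member[OF that(2)] member[OF that(1)]] by auto
    moreover have "fst ?p \<le> snd ?p" "fst ?q \<le> snd ?q"
      using interval member that by simp_all
    ultimately show ?thesis
      using antichain_lex_less \<open>?p < ?q\<close> \<open>?p \<noteq> ?q\<close> unfolding a_def b_def by blast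
  qed
  have "t \<ge> 1"
    using \<open>xs \<noteq> []\<close> unfolding t_def by (simp add: Suc_leI)
  then have "0 \<le> a 1" "a t \<le> b t" "b t \<le> n"
    using bounds member[of 1] member[of t] unfolding a_def b_def by auto
  then have "standard_form n H t a b"
    using \<open>t \<ge> 1\<close> image mono bounds member[of 1]
    unfolding standard_form_def strict_mono_on_def a_def b_def by force
  then show ?thesis by blast
qed

theorem mainTheorem4:
  fixes l n :: int and H :: "(int \<times> int) set"
  assumes "0 < l" and "l \<le> n"
    and "\<forall>I\<in>H. is_interval I"
    and "minimal_powerful l n H"
  shows "(\<exists>t a b. standard_form n H t a b) \<and>
         (\<forall>t a b. standard_form n H t a b \<longrightarrow>
            (\<forall>i j. 1 \<le> i \<and> i \<le> t \<and> 1 \<le> j \<and> j \<le> t \<and> j \<ge> i + 2 \<longrightarrow>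
               a j \<ge> b i - l + 2))"
proof
  have powerful: "powerful l n H"
    using assms(4) unfolding minimal_powerful_def by blast
  show "\<exists>t a b. standard_form n H t a b"
  proof (rule antichain_standard_form)
    show "finite H" using powerful_finite[OF powerful] .
    show "H \<noteq> {}" using powerful_nonempty[OF powerful assms(2)] .
    show "\<forall>(a, b)\<in>H. 0 \<le> a \<and> a \<le> b \<and> b \<le> n"
      using powerful unfolding powerful_def by blast
  qed (use minimal_powerful_no_capture[OF assms(4)] in blast)
next
  show "\<forall>t a b. standard_form n H t a b \<longrightarrow>
          (\<forall>i j. 1 \<le> i \<and> i \<le> t \<and> 1 \<le> j \<and> j \<le> t \<and> j \<ge> i + 2 \<longrightarrow> a j \<ge> b i - l + 2)"
  proof (intro allI impI, elim conjE)
    fix t a b i j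
    assume sf: "standard_form n H t a b" and "1 \<le> i" "i \<le> t" "1 \<le> j" "j \<le> t" "i + 2 \<le> j"
    then have "i \<in> {1..t}" "i + 1 \<in> {1..t}" "j \<in> {1..t}" by auto
    moreover have "H = (\<lambda>i. (a i, b i)) ` {1..t}" "strict_mono_on {1..t} a" "strict_mono_on {1..t} b"
      using sf unfolding standard_form_def by auto
    ultimately show "a j \<ge> b i - l + 2"
      using minimal_powerful_gap[OF assms(4), of "a i" "b i" "a (i + 1)" "b (i + 1)" "a j" "b j"]
        \<open>i + 2 \<le> j\<close> unfolding strict_mono_on_def by auto
  qed
qed

end
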